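(* Let $0\le \mu<L<\infty$, $q=\mu/L$, and let $f\in\mathcal{F}_{\mu,L}(\mathbb{R}^d)$ admit a minimizer $x_\star$, with $f_\star=f(x_\star)$. For any $x_0=z_0\in\mathbb{R}^d$ and any integer $N\ge 1$, the iterates of the Information-Theoretic Exact Method (ITEM) satisfy \[ \|z_N-x_\star\|^2 \le \frac{1}{1+qA_N}\|z_0-x_\star\|^2\le \frac{(1-\sqrt{q})^{2N}}{(1-\sqrt{q})^{2N}+q}\|z_0-x_\star\|^2, \] \[ \psi_N \le \frac{L}{(1-q)A_{N+1}}\|z_0-x_\star\|^2\le \min\left\{(1-\sqrt{q})^{2(N+1)},\frac{1}{(N+1)^2}\right\}\frac{L}{1-q}\|z_0-x_\star\|^2, \] where $\psi_k=f(y_k)-f_\star-\tfrac{1}{2L}\|\nabla f(y_k)\|^2-\tfrac{\mu}{2(1-\mu/L)}\|y_k-\tfrac1L\nabla f(y_k)-x_\star\|^2$, and moreover $\psi_k\ge 0$.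
   Context: $\mathcal{F}_{\mu,L}(\mathbb{R}^d)$ denotes the set of proper closed convex functions $f:\mathbb{R}^d\to\mathbb{R}$ such that for all $x,y$: $f(x)\le f(y)+\langle\nabla f(y);x-y\rangle+\frac L2\|x-y\|^2$ and $f(x)\ge f(y)+\langle\nabla f(y);x-y\rangle+\frac\mu2\|x-y\|^2$. ITEM: given $x_0$, set $z_0=x_0$, $A_0=0$, $q=\mu/L$, and for $k=0,1,\dots$: $A_{k+1}=\frac{(1+q)A_k+2\left(1+\sqrt{(1+A_k)(1+qA_k)}\right)}{(1-q)^2}$, $\beta_k=\frac{A_k}{(1-q)A_{k+1}}$, $\delta_k=\frac12\frac{(1-q)^2A_{k+1}-(1+q)A_k}{1+q+qA_k}$, $y_k=(1-\beta_k)z_k+\beta_k x_k$, $x_{k+1}=y_k-\frac1L\nabla f(y_k)$, $z_{k+1}=(1-q\delta_k)z_k+q\delta_k y_k-\frac{\delta_k}{L}\nabla f(y_k)$. *)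

theory Defs
  imports "HOL-Analysis.Analysis"
begin

definition smooth_strongly_convex ::
  "real \<Rightarrow> real \<Rightarrow> ('a::euclidean_space \<Rightarrow> real) \<Rightarrow> ('a \<Rightarrow> 'a) \<Rightarrow> bool" where
  "smooth_strongly_convex \<mu> L f g \<longleftrightarrow>
     convex_on UNIV f \<and>
     (\<forall>x. (f has_derivative (\<lambda>h. g x \<bullet> h)) (at x)) \<and>
     (\<forall>x y. f x \<le> f y + g y \<bullet> (x - y) + L / 2 * (norm (x - y))\<^sup>2) \<and>
     (\<forall>x y. f x \<ge> f y + g y \<bullet> (x - y) + \<mu> / 2 * (norm (x - y))\<^sup>2)"

fun item_A :: "real \<Rightarrow> nat \<Rightarrow> real" where
  "item_A q 0 = 0"
| "item_A q (Suc k) =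
     ((1 + q) * item_A q k + 2 * (1 + sqrt ((1 + item_A q k) * (1 + q * item_A q k)))) / (1 - q)\<^sup>2"

definition item_beta :: "real \<Rightarrow> nat \<Rightarrow> real" where
  "item_beta q k = item_A q k / ((1 - q) * item_A q (Suc k))"

definition item_delta :: "real \<Rightarrow> nat \<Rightarrow> real" where
  "item_delta q k = 1/2 * (((1 - q)\<^sup>2 * item_A q (Suc k) - (1 + q) * item_A q k) / (1 + q + q * item_A q k))"

fun item_xz :: "real \<Rightarrow> real \<Rightarrow> ('a::euclidean_space \<Rightarrow> 'a) \<Rightarrow> 'a \<Rightarrow> nat \<Rightarrow> 'a \<times> 'a" where
  "item_xz \<mu> L g x0 0 = (x0, x0)"
| "item_xz \<mu> L g x0 (Suc k) =
     (let q = \<mu> / L; (x, z) = item_xz \<mu> L g x0 k;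
          y = (1 - item_beta q k) *\<^sub>R z + item_beta q k *\<^sub>R x;
          d = item_delta q k
      in (y - (1 / L) *\<^sub>R g y,
          (1 - q * d) *\<^sub>R z + (q * d) *\<^sub>R y - (d / L) *\<^sub>R g y))"

definition item_x :: "real \<Rightarrow> real \<Rightarrow> ('a::euclidean_space \<Rightarrow> 'a) \<Rightarrow> 'a \<Rightarrow> nat \<Rightarrow> 'a" where
  "item_x \<mu> L g x0 k = fst (item_xz \<mu> L g x0 k)"

definition item_z :: "real \<Rightarrow> real \<Rightarrow> ('a::euclidean_space \<Rightarrow> 'a) \<Rightarrow> 'a \<Rightarrow> nat \<Rightarrow> 'a" where
  "item_z \<mu> L g x0 k = snd (item_xz \<mu> L g x0 k)"

definition item_y :: "real \<Rightarrow> real \<Rightarrow> ('a::euclidean_space \<Rightarrow> 'a) \<Rightarrow> 'a \<Rightarrow> nat \<Rightarrow> 'a" where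
  "item_y \<mu> L g x0 k =
     (let q = \<mu> / L in
      (1 - item_beta q k) *\<^sub>R item_z \<mu> L g x0 k + item_beta q k *\<^sub>R item_x \<mu> L g x0 k)"

definition item_psi :: "real \<Rightarrow> real \<Rightarrow> ('a::euclidean_space \<Rightarrow> real) \<Rightarrow> ('a \<Rightarrow> 'a) \<Rightarrow> 'a \<Rightarrow> 'a \<Rightarrow> nat \<Rightarrow> real" where
  "item_psi \<mu> L f g x0 xs k =
     (let y = item_y \<mu> L g x0 k in
      f y - f xs - 1 / (2 * L) * (norm (g y))\<^sup>2
        - \<mu> / (2 * (1 - \<mu> / L)) * (norm (y - (1 / L) *\<^sub>R g y - xs))\<^sup>2)"

end

theory Submission
  imports Defs
begin

text \<open>
  ITEM is analysed through the potential
  \<open>\<phi>\<^sub>k = L (1 + q A\<^sub>k) \<parallel>z\<^sub>k - x\<^sub>\<star>\<parallel>\<^sup>2 + (1 - q) A\<^sub>k \<psi>\<^sub>k\<^sub>-\<^sub>1\<close>.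
  Every function in \<open>\<F>\<^sub>\<mu>\<^sub>,\<^sub>L\<close> satisfies the interpolation inequality
  \<open>f a \<ge> f b + \<langle>g b, a - b\<rangle> + (\<parallel>g a - g b\<parallel>\<^sup>2/L + \<mu>\<parallel>a - b\<parallel>\<^sup>2 - 2q\<langle>g a - g b, a - b\<rangle>) / (2(1 - q))\<close>,
  and the coefficients \<open>\<beta>\<^sub>k, \<delta>\<^sub>k\<close> are chosen so that \<open>\<phi>\<^sub>k - \<phi>\<^sub>k\<^sub>+\<^sub>1\<close> is, as an algebraic
  identity, the combination with weights \<open>(1 - q) A\<^sub>k\<close> and \<open>(1 - q) (A\<^sub>k\<^sub>+\<^sub>1 - A\<^sub>k)\<close> of the
  interpolation inequalities between \<open>y\<^sub>k\<^sub>-\<^sub>1, y\<^sub>k\<close> and between \<open>x\<^sub>\<star>, y\<^sub>k\<close>. Hence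
  \<open>\<phi>\<^sub>N \<le> \<phi>\<^sub>0 = L \<parallel>z\<^sub>0 - x\<^sub>\<star>\<parallel>\<^sup>2\<close>; since \<open>\<psi>\<^sub>k\<close> is itself the interpolation inequality between
  \<open>y\<^sub>k\<close> and \<open>x\<^sub>\<star>\<close>, it is nonnegative, and both bounds follow. The rates come from
  \<open>A\<^sub>k \<ge> k\<^sup>2\<close> and \<open>(1 - \<surd>q)\<^sup>2\<^sup>k A\<^sub>k \<ge> 1\<close>.
\<close>

definition interpolation_gap ::
  "real \<Rightarrow> real \<Rightarrow> real \<Rightarrow> real \<Rightarrow> 'a::real_inner \<Rightarrow> 'a \<Rightarrow> 'a \<Rightarrow> 'a \<Rightarrow> real" where
  "interpolation_gap \<mu> L fa fb ga gb a b =
     fa - fb - gb \<bullet> (a - b)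
     - 1 / (2 * (1 - \<mu> / L)) * (1 / L * (norm (ga - gb))\<^sup>2 + \<mu> * (norm (a - b))\<^sup>2
                                 - 2 * (\<mu> / L) * ((ga - gb) \<bullet> (a - b)))"

text \<open>The witness \<open>w\<close> minimises the difference of the quadratic upper bound around \<open>a\<close>
  and the quadratic lower bound around \<open>b\<close>.\<close>

lemma interpolation_gap_eq_bounds_diff:
  fixes a b w ga gb :: "'a::real_inner"
  assumes "\<mu> < L" and "0 < L"
    and w: "w = a - (1 / (L - \<mu>)) *\<^sub>R (ga - gb - \<mu> *\<^sub>R (a - b))"
  shows "fa + ga \<bullet> (w - a) + L / 2 * (norm (w - a))\<^sup>2 - (fb + gb \<bullet> (w - b) + \<mu> / 2 * (norm (w - b))\<^sup>2)
       = interpolation_gap \<mu> L fa fb ga gb a b"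
proof -
  define k where "k = 1 / (L - \<mu>)"
  define iL where "iL = 1 / L"
  define c where "c = 1 / (1 - \<mu> / L)"
  have k: "(L - \<mu>) * k = 1" using assms(1) by (simp add: k_def)
  have iL: "L * iL = 1" using assms(2) by (simp add: iL_def)
  have c: "(1 - \<mu> * iL) * c = 1" using assms(1,2) by (simp add: c_def iL_def field_simps)
  have e: "w - a = - (k *\<^sub>R (ga - gb - \<mu> *\<^sub>R (a - b)))"
    "w - b = (a - b) - k *\<^sub>R (ga - gb - \<mu> *\<^sub>R (a - b))"
    by (simp_all add: w k_def)
  have e': "\<mu> / L = \<mu> * iL" "1 / (2 * (1 - \<mu> * iL)) = c / 2" "1 / L = iL"
    by (simp_all add: c_def iL_def)
  show ?thesis
    unfolding interpolation_gap_def e e' power2_norm_eq_inner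
    apply (simp add: inner_simps inner_commute)
    using k iL c by algebra
qed

lemma smooth_strongly_convex_interpolation:
  assumes F: "smooth_strongly_convex \<mu> L f g" and "0 \<le> \<mu>" and "\<mu> < L"
  shows "0 \<le> interpolation_gap \<mu> L (f a) (f b) (g a) (g b) a b"
proof -
  define w where "w = a - (1 / (L - \<mu>)) *\<^sub>R (g a - g b - \<mu> *\<^sub>R (a - b))"
  have "f b + g b \<bullet> (w - b) + \<mu> / 2 * (norm (w - b))\<^sup>2 \<le> f w"
    and "f w \<le> f a + g a \<bullet> (w - a) + L / 2 * (norm (w - a))\<^sup>2"
    using F unfolding smooth_strongly_convex_def by auto
  then show ?thesis
    using interpolation_gap_eq_bounds_diff[OF \<open>\<mu> < L\<close> _ w_def, of "f a" "f b"] assms(2,3) by simp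
qed

lemma gradient_zero_at_minimizer:
  fixes f :: "'a::real_inner \<Rightarrow> real"
  assumes "(f has_derivative (\<lambda>h. g \<bullet> h)) (at x)" and "\<forall>y. f x \<le> f y"
  shows "g = 0"
proof -
  have "(\<lambda>h. g \<bullet> h) = (\<lambda>h. 0)"
    using has_derivative_local_min[OF assms(1)] assms(2) by simp
  then have "g \<bullet> g = 0" by metis
  then show ?thesis by simp
qed

lemma item_A_nonneg: "0 \<le> q \<Longrightarrow> 0 \<le> item_A q k"
  by (induction k) simp_all

lemma item_A_Suc_mult:
  "q \<noteq> 1 \<Longrightarrow>
    (1 - q)\<^sup>2 * item_A q (Suc k) = (1 + q) * item_A q k + 2 * (1 + sqrt ((1 + item_A q k) * (1 + q * item_A q k)))"
  by simp

declare item_A.simps(2) [simp del]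

lemma item_A_Suc_ge:
  assumes "0 \<le> q" and "q < 1"
  shows "(1 + q) * item_A q k + 2 * (1 + sqrt ((1 + item_A q k) * (1 + q * item_A q k))) \<le> item_A q (Suc k)"
proof -
  let ?n = "(1 + q) * item_A q k + 2 * (1 + sqrt ((1 + item_A q k) * (1 + q * item_A q k)))"
  have "0 \<le> ?n" using item_A_nonneg[OF assms(1)] assms(1) by simp
  moreover have "0 < (1 - q)\<^sup>2" "(1 - q)\<^sup>2 \<le> 1" using assms by (auto simp: power_le_one)
  ultimately have "?n \<le> ?n / (1 - q)\<^sup>2" by (simp add: le_divide_eq mult_left_le)
  then show ?thesis by (simp add: item_A.simps(2))
qed

lemma item_A_Suc_ge_add_2:
  assumes "0 \<le> q" and "q < 1"
  shows "item_A q k + 2 \<le> item_A q (Suc k)"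
proof -
  define A where "A = item_A q k"
  define s where "s = sqrt ((1 + A) * (1 + q * A))"
  have A: "0 \<le> A" using item_A_nonneg[OF assms(1)] by (simp add: A_def)
  then have "0 \<le> s" using assms(1) by (simp add: s_def)
  moreover have "0 \<le> q * A" using A assms(1) by simp
  moreover have "(1 + q) * A + 2 * (1 + s) \<le> item_A q (Suc k)"
    using item_A_Suc_ge[OF assms, of k] by (simp add: A_def s_def)
  ultimately show ?thesis by (simp add: A_def algebra_simps)
qed

lemma item_A_quadratic:
  assumes "0 \<le> q" and "q < 1"
  shows "(1 - q)\<^sup>2 * (item_A q (Suc k))\<^sup>2 - (2 * (1 + q) * item_A q k + 4) * item_A q (Suc k)
           + (item_A q k)\<^sup>2 = 0"
proof -
  define A where "A = item_A q k"
  define A' where "A' = item_A q (Suc k)"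
  define s where "s = sqrt ((1 + A) * (1 + q * A))"
  have "s\<^sup>2 = (1 + A) * (1 + q * A)"
    unfolding s_def using item_A_nonneg[OF assms(1)] assms(1) by (simp add: A_def)
  moreover have "(1 - q)\<^sup>2 * A' = (1 + q) * A + 2 + 2 * s"
    using item_A_Suc_mult assms(2) by (simp add: A_def A'_def s_def)
  ultimately have "(1 - q)\<^sup>2 * ((1 - q)\<^sup>2 * A'\<^sup>2 - (2 * (1 + q) * A + 4) * A' + A\<^sup>2) = 0"
    by algebra
  then show ?thesis using assms by (simp add: A_def A'_def)
qed

lemma item_beta_relation:
  assumes "0 \<le> q" and "q < 1"
  shows "item_beta q k * ((1 - q) * item_A q (Suc k)) = item_A q k"
  using item_A_Suc_ge_add_2[OF assms, of k] item_A_nonneg[OF assms(1), of k] assms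
  by (simp add: item_beta_def)

lemma item_delta_relations:
  fixes q :: real and k :: nat
  assumes "0 \<le> q" and "q < 1"
  defines "A \<equiv> item_A q k" and "A' \<equiv> item_A q (Suc k)" and "d \<equiv> item_delta q k"
  shows "2 * d * (1 + q * A') = (1 + q) * A' - A" and "d\<^sup>2 * (1 + q * A') = A'"
proof -
  have A: "0 \<le> A" "0 \<le> A'" using item_A_nonneg[OF assms(1)] by (simp_all add: A_def A'_def)
  have quadratic: "(1 - q)\<^sup>2 * A'\<^sup>2 - (2 * (1 + q) * A + 4) * A' + A\<^sup>2 = 0"
    using item_A_quadratic[OF assms(1,2)] by (simp add: A_def A'_def)
  have pos: "0 < 1 + q + q * A" using assms(1) A by (simp add: add_pos_nonneg)
  then have "d * (2 * (1 + q + q * A)) = (1 - q)\<^sup>2 * A' - (1 + q) * A"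
    unfolding d_def item_delta_def by (simp add: A_def A'_def)
  then have "(2 * d * (1 + q * A') - ((1 + q) * A' - A)) * (1 + q + q * A) = 0"
    using quadratic by algebra
  then show linear: "2 * d * (1 + q * A') = (1 + q) * A' - A" using pos by simp
  have "0 < 1 + q * A'" using assms(1) A by (simp add: add_pos_nonneg)
  moreover have "(1 + q * A') * (d\<^sup>2 * (1 + q * A') - A') = 0"
    using linear quadratic by algebra
  ultimately show "d\<^sup>2 * (1 + q * A') = A'" by simp
qed

lemma item_A_ge_square:
  assumes "0 \<le> q" and "q < 1"
  shows "(real k)\<^sup>2 \<le> item_A q k"
proof (induction k)
  case 0
  then show ?case by simp
next
  case (Suc k)
  define A where "A = item_A q k"
  have "0 \<le> A" using item_A_nonneg[OF assms(1)] by (simp add: A_def)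
  then have "(1 + A) * 1 \<le> (1 + A) * (1 + q * A)"
    using assms(1) by (intro mult_left_mono) simp_all
  then have "(real k)\<^sup>2 \<le> (1 + A) * (1 + q * A)" using Suc by (simp add: A_def)
  then have "real k \<le> sqrt ((1 + A) * (1 + q * A))" by (simp add: real_le_rsqrt)
  moreover have "A \<le> (1 + q) * A"
    using mult_nonneg_nonneg[OF assms(1) \<open>0 \<le> A\<close>] by (simp add: algebra_simps)
  ultimately have "(real k)\<^sup>2 + 2 * real k + 1 \<le> item_A q (Suc k)"
    using item_A_Suc_ge[OF assms, of k] Suc by (simp add: A_def)
  then show ?case by (simp add: power2_eq_square algebra_simps)
qed

lemma item_A_Suc_ge_geometric:
  assumes "0 \<le> q" and "q < 1"
  shows "item_A q k + 1 \<le> (1 - sqrt q)\<^sup>2 * item_A q (Suc k)"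
proof -
  define A where "A = item_A q k"
  define t where "t = sqrt q"
  have A: "0 \<le> A" using item_A_nonneg[OF assms(1)] by (simp add: A_def)
  have t: "0 \<le> t" "t < 1" "q = t\<^sup>2" using assms by (auto simp: t_def)
  have "(1 + A) * (1 + q * A) - (1 + t * A)\<^sup>2 = A * (1 - t)\<^sup>2"
    by (simp add: t(3) power2_eq_square algebra_simps)
  moreover have "0 \<le> A * (1 - t)\<^sup>2" using A by simp
  ultimately have "(1 + t * A)\<^sup>2 \<le> (1 + A) * (1 + q * A)" by linarith
  then have s: "1 + t * A \<le> sqrt ((1 + A) * (1 + q * A))" by (simp add: real_le_rsqrt)
  have "(1 + t)\<^sup>2 * ((1 - t)\<^sup>2 * item_A q (Suc k)) = (1 - q)\<^sup>2 * item_A q (Suc k)"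
    by (simp add: t(3) power2_eq_square algebra_simps)
  also have "\<dots> = (1 + q) * A + 2 * (1 + sqrt ((1 + A) * (1 + q * A)))"
    using item_A_Suc_mult assms(2) by (simp add: A_def)
  also have "\<dots> \<ge> (1 + t)\<^sup>2 * A + 4"
    using s by (simp add: t(3) power2_eq_square algebra_simps)
  finally have "(1 + t)\<^sup>2 * A + 4 \<le> (1 + t)\<^sup>2 * ((1 - t)\<^sup>2 * item_A q (Suc k))" .
  moreover have "(1 + t)\<^sup>2 \<le> 4" using mult_mono[of "1 + t" 2 "1 + t" 2] t by (simp add: power2_eq_square)
  ultimately have "(1 + t)\<^sup>2 * (A + 1) \<le> (1 + t)\<^sup>2 * ((1 - t)\<^sup>2 * item_A q (Suc k))"
    by (simp add: algebra_simps)
  moreover have "0 < (1 + t)\<^sup>2" using t by simp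
  ultimately show ?thesis by (simp add: A_def t_def)
qed

lemma item_A_ge_geometric:
  assumes "0 \<le> q" and "q < 1" and "k \<ge> 1"
  shows "1 \<le> (1 - sqrt q) ^ (2 * k) * item_A q k"
  unfolding power_mult using \<open>k \<ge> 1\<close>
proof (induction k rule: dec_induct)
  case base
  then show ?case using item_A_Suc_ge_geometric[OF assms(1,2), of 0] by simp
next
  case (step k)
  define r where "r = (1 - sqrt q)\<^sup>2"
  have "r ^ k * (item_A q k + 1) \<le> r ^ k * (r * item_A q (Suc k))"
    using item_A_Suc_ge_geometric[OF assms(1,2), of k] by (simp add: r_def mult_left_mono)
  moreover have "0 \<le> r ^ k" by (simp add: r_def)
  ultimately have "1 \<le> r ^ k * (r * item_A q (Suc k))"
    using step.IH by (simp add: r_def[symmetric] distrib_left)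
  then show ?case unfolding r_def by (simp add: mult_ac)
qed

lemma one_plus_item_A_inverse_le:
  assumes "0 \<le> q" and "q < 1" and "k \<ge> 1"
  shows "1 / (1 + q * item_A q k) \<le> (1 - sqrt q) ^ (2 * k) / ((1 - sqrt q) ^ (2 * k) + q)"
proof -
  define r where "r = (1 - sqrt q) ^ (2 * k)"
  have "0 < r" using assms(1,2) by (simp add: r_def)
  have "q * 1 \<le> q * (r * item_A q k)"
    using item_A_ge_geometric[OF assms] assms(1) by (intro mult_left_mono) (simp_all add: r_def)
  then have "r + q \<le> r * (1 + q * item_A q k)" by (simp add: algebra_simps)
  moreover have "0 \<le> q * item_A q k" using item_A_nonneg[OF assms(1)] assms(1) by simp
  ultimately show ?thesis using \<open>0 < r\<close> assms(1) by (simp add: r_def[symmetric] divide_simps)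
qed

lemma item_A_Suc_inverse_le:
  assumes "0 \<le> q" and "q < 1"
  shows "1 / item_A q (Suc k) \<le> min ((1 - sqrt q) ^ (2 * (k + 1))) (1 / (real k + 1)\<^sup>2)"
proof -
  have A: "0 < item_A q (Suc k)"
    using item_A_Suc_ge_add_2[OF assms, of k] item_A_nonneg[OF assms(1), of k] by simp
  have "1 \<le> (1 - sqrt q) ^ (2 * (k + 1)) * item_A q (Suc k)"
    using item_A_ge_geometric[OF assms, of "Suc k"] by simp
  moreover have "(real k + 1)\<^sup>2 \<le> item_A q (Suc k)"
    using item_A_ge_square[OF assms, of "Suc k"] by (simp add: add.commute)
  ultimately show ?thesis using A by (simp add: divide_simps)
qed

lemma item_step_identity:
  fixes z z' x y yp gp gy xs :: "'a::real_inner"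
  assumes "L \<noteq> 0" and "\<mu> \<noteq> L"
    and q: "q = \<mu> / L"
    and beta: "b * ((1 - q) * A') = A"
    and delta: "2 * d * (1 + q * A') = (1 + q) * A' - A" "d\<^sup>2 * (1 + q * A') = A'"
    and x: "x = yp - (1 / L) *\<^sub>R gp"
    and y: "y = (1 - b) *\<^sub>R z + b *\<^sub>R x"
    and z': "z' = (1 - q * d) *\<^sub>R z + (q * d) *\<^sub>R y - (d / L) *\<^sub>R gy"
  shows "L * (1 + q * A) * (norm (z - xs))\<^sup>2 + (1 - q) * A * interpolation_gap \<mu> L fp fs gp 0 yp xs
       - (L * (1 + q * A') * (norm (z' - xs))\<^sup>2 + (1 - q) * A' * interpolation_gap \<mu> L fy fs gy 0 y xs)
       = (1 - q) * A * interpolation_gap \<mu> L fp fy gp gy yp y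
       + (1 - q) * (A' - A) * interpolation_gap \<mu> L fs fy 0 gy xs y"
proof -
  define iL where "iL = 1 / L"
  define c where "c = 1 / (1 - q)"
  have iL: "L * iL = 1" using assms(1) by (simp add: iL_def)
  have "q \<noteq> 1" using assms(1,2) q by auto
  then have c: "(1 - q) * c = 1" by (simp add: c_def)
  have mu: "\<mu> = q * L" using assms(1) q by simp
  define u where "u = z - xs"
  define w where "w = yp - xs"
  have ex: "x - xs = w - iL *\<^sub>R gp" using x by (simp add: w_def iL_def)
  have "y - xs = (1 - b) *\<^sub>R u + b *\<^sub>R (x - xs)" using y by (simp add: u_def algebra_simps)
  then have ey: "y - xs = (1 - b) *\<^sub>R u + b *\<^sub>R (w - iL *\<^sub>R gp)" by (simp only: ex)
  have ez: "z' - xs = (1 - q * d) *\<^sub>R u + (q * d) *\<^sub>R (y - xs) - (d * iL) *\<^sub>R gy"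
    using z' by (simp add: u_def iL_def algebra_simps)
  have e1: "\<mu> / L = q" "1 / (2 * (1 - q)) = c / 2" "1 / L = iL" by (simp_all add: q c_def iL_def)
  have e2: "yp - y = w - (y - xs)" "xs - y = - (y - xs)" "z - xs = u" "yp - xs = w" by (simp_all add: w_def u_def)
  show ?thesis
    unfolding interpolation_gap_def e1 e2 ez power2_norm_eq_inner
    unfolding ey
    apply (simp add: inner_simps inner_commute mu)
    using iL c beta delta by algebra
qed

lemma item_psi_eq_interpolation_gap:
  assumes "0 < L" and "\<mu> < L"
  shows "item_psi \<mu> L f g x0 xs k =
    interpolation_gap \<mu> L (f (item_y \<mu> L g x0 k)) (f xs) (g (item_y \<mu> L g x0 k)) 0 (item_y \<mu> L g x0 k) xs"
proof -
  define y where "y = item_y \<mu> L g x0 k"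
  define iL where "iL = 1 / L"
  define c where "c = 1 / (1 - \<mu> * iL)"
  have iL: "L * iL = 1" using assms(1) by (simp add: iL_def)
  have c: "(1 - \<mu> * iL) * c = 1" using assms by (simp add: c_def iL_def field_simps)
  have e: "\<mu> / L = \<mu> * iL" "1 / (2 * (1 - \<mu> * iL)) = c / 2" "\<mu> / (2 * (1 - \<mu> * iL)) = \<mu> * c / 2"
    "1 / (2 * L) = iL / 2" "1 / L = iL" "y - iL *\<^sub>R g y - xs = (y - xs) - iL *\<^sub>R g y"
    by (simp_all add: c_def iL_def)
  show ?thesis
    unfolding item_psi_def interpolation_gap_def Let_def y_def[symmetric] e power2_norm_eq_inner
    apply (simp add: inner_simps inner_commute)
    using iL c by algebra
qed

lemma item_iterates_0: "item_x \<mu> L g x0 0 = x0" "item_z \<mu> L g x0 0 = x0"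
  by (simp_all add: item_x_def item_z_def)

lemma item_x_Suc:
  "item_x \<mu> L g x0 (Suc k) = item_y \<mu> L g x0 k - (1 / L) *\<^sub>R g (item_y \<mu> L g x0 k)"
  by (simp add: item_x_def item_y_def item_z_def Let_def split: prod.split)

lemma item_z_Suc:
  "item_z \<mu> L g x0 (Suc k) =
     (1 - \<mu> / L * item_delta (\<mu> / L) k) *\<^sub>R item_z \<mu> L g x0 k
     + (\<mu> / L * item_delta (\<mu> / L) k) *\<^sub>R item_y \<mu> L g x0 k
     - (item_delta (\<mu> / L) k / L) *\<^sub>R g (item_y \<mu> L g x0 k)"
  by (simp add: item_x_def item_y_def item_z_def Let_def split: prod.split)

text \<open>At \<open>k = 0\<close> the truncated index \<open>k - 1\<close> is harmless, because \<open>A\<^sub>0 = 0\<close>.\<close>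

definition item_potential ::
  "real \<Rightarrow> real \<Rightarrow> ('a::euclidean_space \<Rightarrow> real) \<Rightarrow> ('a \<Rightarrow> 'a) \<Rightarrow> 'a \<Rightarrow> 'a \<Rightarrow> nat \<Rightarrow> real" where
  "item_potential \<mu> L f g x0 xs k =
     L * (1 + \<mu> / L * item_A (\<mu> / L) k) * (norm (item_z \<mu> L g x0 k - xs))\<^sup>2
     + (1 - \<mu> / L) * item_A (\<mu> / L) k * item_psi \<mu> L f g x0 xs (k - 1)"

lemma item_potential_decrease_eq:
  assumes "0 \<le> \<mu>" and "\<mu> < L"
    and x: "item_x \<mu> L g x0 k = yp - (1 / L) *\<^sub>R gp"
    and psi: "item_A (\<mu> / L) k * item_psi \<mu> L f g x0 xs (k - 1)
      = item_A (\<mu> / L) k * interpolation_gap \<mu> L fp (f xs) gp 0 yp xs"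
  defines "q \<equiv> \<mu> / L" and "y \<equiv> item_y \<mu> L g x0 k"
  shows "item_potential \<mu> L f g x0 xs k - item_potential \<mu> L f g x0 xs (Suc k)
    = (1 - q) * item_A q k * interpolation_gap \<mu> L fp (f y) gp (g y) yp y
      + (1 - q) * (item_A q (Suc k) - item_A q k) * interpolation_gap \<mu> L (f xs) (f y) 0 (g y) xs y"
proof -
  have "0 < L" using assms(1,2) by linarith
  then have q: "0 \<le> q" "q < 1" "L \<noteq> 0" "\<mu> \<noteq> L" using assms(1,2) by (simp_all add: q_def)
  have "item_potential \<mu> L f g x0 xs k
    = L * (1 + q * item_A q k) * (norm (item_z \<mu> L g x0 k - xs))\<^sup>2
      + (1 - q) * item_A q k * interpolation_gap \<mu> L fp (f xs) gp 0 yp xs"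
    using psi by (simp add: item_potential_def q_def)
  moreover have "item_potential \<mu> L f g x0 xs (Suc k)
    = L * (1 + q * item_A q (Suc k)) * (norm (item_z \<mu> L g x0 (Suc k) - xs))\<^sup>2
      + (1 - q) * item_A q (Suc k) * interpolation_gap \<mu> L (f y) (f xs) (g y) 0 y xs"
    unfolding item_potential_def item_psi_eq_interpolation_gap[OF \<open>0 < L\<close> assms(2)]
    by (simp add: q_def y_def)
  moreover have "y = (1 - item_beta q k) *\<^sub>R item_z \<mu> L g x0 k + item_beta q k *\<^sub>R item_x \<mu> L g x0 k"
    by (simp add: y_def item_y_def Let_def q_def)
  moreover have "item_z \<mu> L g x0 (Suc k) = (1 - q * item_delta q k) *\<^sub>R item_z \<mu> L g x0 k
      + (q * item_delta q k) *\<^sub>R y - (item_delta q k / L) *\<^sub>R g y"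
    by (simp add: item_z_Suc q_def y_def)
  ultimately show ?thesis
    using item_step_identity[OF q(3,4) meta_eq_to_obj_eq[OF q_def] item_beta_relation[OF q(1,2)]
        item_delta_relations[OF q(1,2)] x]
    by simp
qed

context
  fixes \<mu> L :: real and f :: "'a::euclidean_space \<Rightarrow> real" and g :: "'a \<Rightarrow> 'a" and xs x0 :: 'a
  assumes mu_nonneg: "0 \<le> \<mu>" and mu_less: "\<mu> < L"
    and F: "smooth_strongly_convex \<mu> L f g" and minimizer: "\<forall>x. f xs \<le> f x"
begin

private lemma gradient_minimizer_eq_0: "g xs = 0"
  using F minimizer unfolding smooth_strongly_convex_def by (blast intro: gradient_zero_at_minimizer)

private lemma L_pos: "0 < L"
  using mu_nonneg mu_less by linarith

lemma item_psi_nonneg: "0 \<le> item_psi \<mu> L f g x0 xs k"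
  unfolding item_psi_eq_interpolation_gap[OF L_pos mu_less]
  using smooth_strongly_convex_interpolation[OF F mu_nonneg mu_less, of "item_y \<mu> L g x0 k" xs]
  by (simp add: gradient_minimizer_eq_0)

lemma item_potential_Suc_le:
  "item_potential \<mu> L f g x0 xs (Suc k) \<le> item_potential \<mu> L f g x0 xs k"
proof -
  define q where "q = \<mu> / L"
  define A where "A = item_A q k"
  define y where "y = item_y \<mu> L g x0 k"
  have q: "0 \<le> q" "q < 1" using mu_nonneg mu_less L_pos by (simp_all add: q_def)
  have A: "0 \<le> A" "A \<le> item_A q (Suc k)"
    using item_A_nonneg[OF q(1), of k] item_A_Suc_ge_add_2[OF q, of k] by (simp_all add: A_def)
  obtain yp gp fp where x: "item_x \<mu> L g x0 k = yp - (1 / L) *\<^sub>R gp"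
    and psi: "A * item_psi \<mu> L f g x0 xs (k - 1) = A * interpolation_gap \<mu> L fp (f xs) gp 0 yp xs"
    and gap: "0 \<le> A * interpolation_gap \<mu> L fp (f y) gp (g y) yp y"
  proof (cases k)
    case 0
    then have "A = 0" by (simp add: A_def)
    then show ?thesis using that[of x0 0] 0 by (simp add: item_iterates_0)
  next
    case (Suc j)
    let ?yj = "item_y \<mu> L g x0 j"
    have "item_x \<mu> L g x0 k = ?yj - (1 / L) *\<^sub>R g ?yj" using Suc by (simp add: item_x_Suc)
    moreover have "A * item_psi \<mu> L f g x0 xs (k - 1) = A * interpolation_gap \<mu> L (f ?yj) (f xs) (g ?yj) 0 ?yj xs"
      unfolding item_psi_eq_interpolation_gap[OF L_pos mu_less] using Suc by simp
    moreover have "0 \<le> A * interpolation_gap \<mu> L (f ?yj) (f y) (g ?yj) (g y) ?yj y"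
      using smooth_strongly_convex_interpolation[OF F mu_nonneg mu_less] A(1) by simp
    ultimately show ?thesis by (rule that)
  qed
  have "0 \<le> (1 - q) * A * interpolation_gap \<mu> L fp (f y) gp (g y) yp y"
    using gap q by (simp add: mult.assoc)
  moreover have "0 \<le> interpolation_gap \<mu> L (f xs) (f y) 0 (g y) xs y"
    using smooth_strongly_convex_interpolation[OF F mu_nonneg mu_less, of xs y]
    by (simp add: gradient_minimizer_eq_0)
  then have "0 \<le> (1 - q) * (item_A q (Suc k) - A) * interpolation_gap \<mu> L (f xs) (f y) 0 (g y) xs y"
    using A q by simp
  ultimately show ?thesis
    using item_potential_decrease_eq[OF mu_nonneg mu_less x, of f xs fp] psi
    unfolding A_def q_def y_def by linarith
qed

lemma item_potential_le_initial: "item_potential \<mu> L f g x0 xs k \<le> L * (norm (x0 - xs))\<^sup>2"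
proof (induction k)
  case 0
  then show ?case by (simp add: item_potential_def item_iterates_0)
next
  case (Suc k)
  then show ?case using item_potential_Suc_le[of k] by linarith
qed

lemma item_z_bound:
  "(norm (item_z \<mu> L g x0 k - xs))\<^sup>2 \<le> 1 / (1 + \<mu> / L * item_A (\<mu> / L) k) * (norm (x0 - xs))\<^sup>2"
proof -
  have q: "0 \<le> \<mu> / L" "\<mu> / L < 1" using mu_nonneg mu_less L_pos by simp_all
  have A: "0 \<le> item_A (\<mu> / L) k" using item_A_nonneg[OF q(1)] .
  then have "0 \<le> (1 - \<mu> / L) * item_A (\<mu> / L) k * item_psi \<mu> L f g x0 xs (k - 1)"
    using q item_psi_nonneg by simp
  then have "L * ((1 + \<mu> / L * item_A (\<mu> / L) k) * (norm (item_z \<mu> L g x0 k - xs))\<^sup>2)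
      \<le> L * (norm (x0 - xs))\<^sup>2"
    using item_potential_le_initial[of k] unfolding item_potential_def by (simp add: mult.assoc)
  then have "(1 + \<mu> / L * item_A (\<mu> / L) k) * (norm (item_z \<mu> L g x0 k - xs))\<^sup>2
      \<le> (norm (x0 - xs))\<^sup>2"
    using L_pos by (simp only: mult_le_cancel_left_pos)
  moreover have "0 < 1 + \<mu> / L * item_A (\<mu> / L) k" using mult_nonneg_nonneg[OF q(1) A] by linarith
  ultimately show ?thesis by (simp add: field_simps)
qed

lemma item_psi_bound:
  "item_psi \<mu> L f g x0 xs k \<le> L / ((1 - \<mu> / L) * item_A (\<mu> / L) (Suc k)) * (norm (x0 - xs))\<^sup>2"
proof -
  have q: "0 \<le> \<mu> / L" "\<mu> / L < 1" using mu_nonneg mu_less L_pos by simp_all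
  have "0 \<le> 1 + \<mu> / L * item_A (\<mu> / L) (Suc k)"
    using mult_nonneg_nonneg[OF q(1) item_A_nonneg[OF q(1), of "Suc k"]] by linarith
  then have "0 \<le> L * (1 + \<mu> / L * item_A (\<mu> / L) (Suc k)) * (norm (item_z \<mu> L g x0 (Suc k) - xs))\<^sup>2"
    using L_pos by (intro mult_nonneg_nonneg) simp_all
  then have "(1 - \<mu> / L) * item_A (\<mu> / L) (Suc k) * item_psi \<mu> L f g x0 xs k \<le> L * (norm (x0 - xs))\<^sup>2"
    using item_potential_le_initial[of "Suc k"] unfolding item_potential_def by simp
  moreover have "0 < (1 - \<mu> / L) * item_A (\<mu> / L) (Suc k)"
    using q item_A_Suc_ge_add_2[OF q, of k] item_A_nonneg[OF q(1), of k] by simp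
  ultimately show ?thesis by (simp add: field_simps)
qed

end

theorem theorem3:
  fixes \<mu> L :: real and f :: "'a::euclidean_space \<Rightarrow> real" and g :: "'a \<Rightarrow> 'a"
    and xs x0 :: 'a and N :: nat
  assumes "0 \<le> \<mu>" and "\<mu> < L"
    and "smooth_strongly_convex \<mu> L f g"
    and "\<forall>x. f xs \<le> f x"
    and "N \<ge> 1"
  defines "q \<equiv> \<mu> / L"
  shows "(norm (item_z \<mu> L g x0 N - xs))\<^sup>2
           \<le> 1 / (1 + q * item_A q N) * (norm (x0 - xs))\<^sup>2
    \<and> 1 / (1 + q * item_A q N) * (norm (x0 - xs))\<^sup>2
           \<le> (1 - sqrt q) ^ (2 * N) / ((1 - sqrt q) ^ (2 * N) + q) * (norm (x0 - xs))\<^sup>2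
    \<and> item_psi \<mu> L f g x0 xs N
           \<le> L / ((1 - q) * item_A q (Suc N)) * (norm (x0 - xs))\<^sup>2
    \<and> L / ((1 - q) * item_A q (Suc N)) * (norm (x0 - xs))\<^sup>2
           \<le> min ((1 - sqrt q) ^ (2 * (N + 1))) (1 / (real N + 1)\<^sup>2) * (L / (1 - q)) * (norm (x0 - xs))\<^sup>2
    \<and> (\<forall>k. item_psi \<mu> L f g x0 xs k \<ge> 0)"
proof -
  note item = assms(1-4)
  have q: "0 \<le> q" "q < 1" using assms(1,2) by (simp_all add: q_def)
  define X where "X = (norm (x0 - xs))\<^sup>2"
  have "0 \<le> X" and "0 \<le> L / (1 - q) * X" using assms(1,2) q by (simp_all add: X_def)
  have distance_rate:
    "1 / (1 + q * item_A q N) * X \<le> (1 - sqrt q) ^ (2 * N) / ((1 - sqrt q) ^ (2 * N) + q) * X"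
    using one_plus_item_A_inverse_le[OF q assms(5)] \<open>0 \<le> X\<close> by (rule mult_right_mono)
  have "L / ((1 - q) * item_A q (Suc N)) * X = 1 / item_A q (Suc N) * (L / (1 - q) * X)"
    by simp
  also have "\<dots> \<le> min ((1 - sqrt q) ^ (2 * (N + 1))) (1 / (real N + 1)\<^sup>2) * (L / (1 - q) * X)"
    using item_A_Suc_inverse_le[OF q] \<open>0 \<le> L / (1 - q) * X\<close> by (rule mult_right_mono)
  finally have psi_rate:
    "L / ((1 - q) * item_A q (Suc N)) * X
       \<le> min ((1 - sqrt q) ^ (2 * (N + 1))) (1 / (real N + 1)\<^sup>2) * (L / (1 - q) * X)" .
  show ?thesis
    using distance_rate psi_rate item_z_bound[OF item, of x0 N] item_psi_bound[OF item, of x0 N]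
      item_psi_nonneg[OF item, of x0]
    unfolding q_def[symmetric] X_def[symmetric] mult.assoc by blast
qed

end
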